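(* Let $\beta\ge0$, $B>0$ and $\epsilon\in(0,1/5)$. There is a constant $C>0$ depending only on $\epsilon,\beta,B$ such that for all $n\ge C$ and all $a,b$ with $n^{-2\epsilon/5}<a<b\le B$, $$Z'_{a,b}:=\int_{\Gamma_{a,b}}e^{\beta n^{-1}S_4(f)}\,df\ \le\ \exp\Big(nL(a,b)+\frac{Cn^{4/5+\epsilon}}{b-a}\Big).$$
   Context: Let $V$ be a finite set with $n=|V|$ and $df$ Lebesgue measure on $\mathbb{C}^V\cong\mathbb{R}^{2n}$. For $f\in\mathbb{C}^V$ and $k\ge2$, $S_k(f)=\sum_{x\in V}|f_x|^k$. For $0<a<b$, $$\Gamma_{a,b}=\{f\in\mathbb{C}^V:\ a^2n^2(1-n^{-1/5})\le S_4(f)\le a^2n^2(1+n^{-1/5}),\ bn(1-n^{-1/5})\le S_2(f)\le bn(1+n^{-1/5})\}.$$ Define $L(a,b)=\beta a^2+\log(b-a)+\log\pi+1$. *)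

theory Defs
  imports "HOL-Analysis.Analysis"
begin

definition Sk :: "nat \<Rightarrow> 'v set \<Rightarrow> ('v \<Rightarrow> complex) \<Rightarrow> real" where
  "Sk k V f = (\<Sum>x\<in>V. cmod (f x) ^ k)"

definition Gamma :: "'v set \<Rightarrow> real \<Rightarrow> real \<Rightarrow> ('v \<Rightarrow> complex) set" where
  "Gamma V a b = (let n = real (card V) in
     {f \<in> PiE V (\<lambda>_. UNIV).
        a\<^sup>2 * n\<^sup>2 * (1 - n powr (-1/5)) \<le> Sk 4 V f \<and>
        Sk 4 V f \<le> a\<^sup>2 * n\<^sup>2 * (1 + n powr (-1/5)) \<and>
        b * n * (1 - n powr (-1/5)) \<le> Sk 2 V f \<and>
        Sk 2 V f \<le> b * n * (1 + n powr (-1/5))})"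

definition L :: "real \<Rightarrow> real \<Rightarrow> real \<Rightarrow> real" where
  "L \<beta> a b = \<beta> * a\<^sup>2 + ln (b - a) + ln pi + 1"

definition lebC :: "'v set \<Rightarrow> ('v \<Rightarrow> complex) measure" where
  "lebC V = PiM V (\<lambda>_. lborel)"

end

theory Submission
  imports Defs "HOL-Probability.Distributions"
begin

(* On the shell Gamma_{a,b} the tilt is at most exp(beta a^2 n (1 + delta)),
   delta = n^(-1/5), so everything rests on a volume bound for Gamma_{a,b}.  Split the
   coordinates of f at the threshold T = n^(1/5) into "heavy" ones (|f_y|^2 > T) and "light"
   ones.  Since S_4 <= (heavy mass)^2 + T (light mass) and S_4 is almost a^2 n^2, the heavy
   mass is almost a n, so the light mass is at most R = (b - a) n + O(n^(4/5)), while there are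
   only O(n^(4/5)) heavy coordinates, each of modulus at most sqrt(S_2).  Hence on Gamma_{a,b}
   the product weight  prod_y (exp(-t |f_y|^2) + c 1{|f_y|^2 <= M})  is at least
   c^(#heavy) exp(-t R), and integrating the product weight over C^V gives (pi/t + c pi M)^n.
   Optimising t = n/R and c = 1/(n t M) yields exp(n L(a,b) + O(n^(4/5+eps)/(b-a))). *)

lemma emeasure_cball_complex:
  assumes "r \<ge> 0"
  shows "emeasure lborel (cball (0::complex) r) = ennreal (pi * r\<^sup>2)"
proof -
  have "unit_ball_vol (real (2*1)) = pi" by (subst unit_ball_vol_even) simp
  then show ?thesis using assms by (simp add: emeasure_cball)
qed

lemma gaussian_integral_real:
  assumes t: "t > 0"
  shows "(\<integral>\<^sup>+x. ennreal (exp (- t * x\<^sup>2)) \<partial>lborel) = ennreal (sqrt (pi / t))"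
proof -
  \<comment> \<open>Rescale the normal density with variance 1/(2t).\<close>
  define \<sigma> where "\<sigma> = sqrt (1 / (2*t))"
  have s: "\<sigma> > 0" "\<sigma>\<^sup>2 = 1/(2*t)" using t by (auto simp: \<sigma>_def)
  have density: "exp (- t * x\<^sup>2) = sqrt (pi / t) * normal_density 0 \<sigma> x" for x
  proof -
    have 1: "2 * pi * \<sigma>\<^sup>2 = pi / t" using s t by (simp add: field_simps)
    have 2: "- (x - 0)\<^sup>2 / (2 * \<sigma>\<^sup>2) = - t * x\<^sup>2" using s t by (simp add: field_simps)
    show ?thesis unfolding normal_density_def 1 2 using t by simp
  qed
  have "(\<integral>\<^sup>+x. ennreal (exp (- t * x\<^sup>2)) \<partial>lborel)
      = (\<integral>\<^sup>+x. ennreal (sqrt (pi/t)) * ennreal (normal_density 0 \<sigma> x) \<partial>lborel)"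
    by (intro nn_integral_cong) (simp only: density, rule ennreal_mult, simp_all add: t less_imp_le)
  also have "\<dots> = ennreal (sqrt (pi/t)) * (\<integral>\<^sup>+x. ennreal (normal_density 0 \<sigma> x) \<partial>lborel)"
    by (rule nn_integral_cmult) simp
  also have "(\<integral>\<^sup>+x. ennreal (normal_density 0 \<sigma> x) \<partial>lborel) = 1"
    using s(1) by (subst nn_integral_eq_integral)
      (auto intro: integrable_normal_density integral_normal_density)
  finally show ?thesis by simp
qed

lemma gaussian_integral_complex:
  assumes t: "t > 0"
  shows "(\<integral>\<^sup>+z. ennreal (exp (- t * (cmod z)\<^sup>2)) \<partial>(lborel::complex measure)) = ennreal (pi / t)"
proof -
  \<comment> \<open>Lebesgue measure on C is the product of two real Lebesgue measures over the basis {1, i}.\<close>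
  interpret real_lines: product_sigma_finite "\<lambda>_. lborel :: real measure"
    by unfold_locales
  have norm_coords: "(cmod (\<Sum>b\<in>Basis. g b *\<^sub>R b :: complex))\<^sup>2 = (g 1)\<^sup>2 + (g \<i>)\<^sup>2"
    for g :: "complex \<Rightarrow> real"
    by (simp add: Basis_complex_def cmod_def complex_eq_iff scaleR_conv_of_real)
  have "(\<integral>\<^sup>+z. ennreal (exp (- t * (cmod z)\<^sup>2)) \<partial>(lborel::complex measure))
     = (\<integral>\<^sup>+g. ennreal (exp (- t * (cmod (\<Sum>b\<in>Basis. g b *\<^sub>R b :: complex))\<^sup>2)) \<partial>(\<Pi>\<^sub>M b\<in>Basis. lborel))"
    by (subst lborel_eq) (subst nn_integral_distr; auto)
  also have "\<dots> = (\<integral>\<^sup>+g. (\<Prod>b\<in>(Basis::complex set). ennreal (exp (- t * (g b)\<^sup>2))) \<partial>(\<Pi>\<^sub>M b\<in>Basis. lborel))"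
    by (intro nn_integral_cong, unfold norm_coords)
      (simp add: Basis_complex_def prod_ennreal[symmetric] exp_add[symmetric] algebra_simps
        ennreal_mult[symmetric])
  also have "\<dots> = (\<Prod>b\<in>(Basis::complex set). (\<integral>\<^sup>+x. ennreal (exp (- t * x\<^sup>2)) \<partial>lborel))"
    by (rule real_lines.product_nn_integral_prod) auto
  also have "\<dots> = ennreal (sqrt (pi/t) ^ 2)"
    using gaussian_integral_real[OF t] t by (simp add: ennreal_power)
  also have "sqrt (pi/t) ^ 2 = pi / t" using t by (simp add: less_imp_le)
  finally show ?thesis .
qed

text \<open>The single-site weight: a Gaussian plus a constant multiple of the disk of radius sqrt M.
  Its Gaussian part controls light coordinates, its disk part heavy (but bounded) ones.\<close>

definition disk_weight :: "real \<Rightarrow> real \<Rightarrow> real \<Rightarrow> complex \<Rightarrow> real" where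
  "disk_weight t c M z = exp (- t * (cmod z)\<^sup>2) + c * indicator (cball 0 (sqrt M)) z"

lemma disk_weight_nonneg: "c \<ge> 0 \<Longrightarrow> disk_weight t c M z \<ge> 0"
  by (simp add: disk_weight_def)

lemma cball_complex_borel[measurable]: "cball (0::complex) r \<in> sets borel"
  by (simp add: borel_closed)

lemma disk_weight_measurable[measurable]: "disk_weight t c M \<in> borel_measurable borel"
  unfolding disk_weight_def by measurable

lemma disk_weight_integral:
  assumes t: "t > 0" and c: "c \<ge> 0" and M: "M \<ge> 0"
  shows "(\<integral>\<^sup>+z. ennreal (disk_weight t c M z) \<partial>(lborel::complex measure)) = ennreal (pi / t + c * pi * M)"
proof -
  have split: "ennreal (disk_weight t c M z)
      = ennreal (exp (- t * (cmod z)\<^sup>2)) + ennreal c * indicator (cball 0 (sqrt M)) z" for z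
    unfolding disk_weight_def using c by (subst ennreal_plus) (auto simp: indicator_def)
  have "(\<integral>\<^sup>+z. ennreal (disk_weight t c M z) \<partial>(lborel::complex measure))
     = (\<integral>\<^sup>+z. ennreal (exp (- t * (cmod z)\<^sup>2)) \<partial>lborel)
       + (\<integral>\<^sup>+z. ennreal c * indicator (cball 0 (sqrt M)) z \<partial>(lborel::complex measure))"
    unfolding split by (rule nn_integral_add) (auto simp: borel_closed)
  also have "\<dots> = (\<integral>\<^sup>+z. ennreal (exp (- t * (cmod z)\<^sup>2)) \<partial>lborel)
       + ennreal c * emeasure lborel (cball (0::complex) (sqrt M))"
    by (subst nn_integral_cmult) (auto simp: borel_closed)
  also have "\<dots> = ennreal (pi / t) + ennreal c * ennreal (pi * M)"
    by (simp only: gaussian_integral_complex[OF t] emeasure_cball_complex[OF real_sqrt_ge_zero[OF M]]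
        real_sqrt_pow2[OF M])
  also have "ennreal c * ennreal (pi * M) = ennreal (c * pi * M)"
    using c M by (subst ennreal_mult[symmetric]) (auto simp: mult.assoc)
  also have "ennreal (pi / t) + ennreal (c * pi * M) = ennreal (pi / t + c * pi * M)"
    using t c M by (intro ennreal_plus[symmetric]) auto
  finally show ?thesis .
qed

lemma disk_weight_prod_integral:
  fixes V :: "'v set"
  assumes "finite V" and "t > 0" and "c \<ge> 0" and "M \<ge> 0"
  shows "(\<integral>\<^sup>+f. (\<Prod>y\<in>V. ennreal (disk_weight t c M (f y))) \<partial>lebC V)
       = ennreal ((pi / t + c * pi * M) ^ card V)"
proof -
  interpret complex_lines: product_sigma_finite "\<lambda>_. lborel :: complex measure"
    by unfold_locales
  have "(\<integral>\<^sup>+f. (\<Prod>y\<in>V. ennreal (disk_weight t c M (f y))) \<partial>lebC V)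
      = (\<Prod>y\<in>V. (\<integral>\<^sup>+z. ennreal (disk_weight t c M z) \<partial>(lborel::complex measure)))"
    unfolding lebC_def by (rule complex_lines.product_nn_integral_prod) (auto simp: assms)
  also have "\<dots> = ennreal (pi / t + c * pi * M) ^ card V"
    using assms by (simp add: disk_weight_integral)
  also have "\<dots> = ennreal ((pi / t + c * pi * M) ^ card V)"
    using assms by (intro ennreal_power) simp
  finally show ?thesis .
qed

lemma nn_integral_le_disk_weight_prod:
  fixes V :: "'v set" and g :: "('v \<Rightarrow> complex) \<Rightarrow> real"
  assumes V: "finite V" and t: "t > 0" and c: "c \<ge> 0" and M: "M \<ge> 0" and K: "K \<ge> 0"
    and dom: "\<And>f. f \<in> G \<Longrightarrow> g f \<le> K * (\<Prod>y\<in>V. disk_weight t c M (f y))"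
  shows "(\<integral>\<^sup>+ f \<in> G. ennreal (g f) \<partial>lebC V) \<le> ennreal (K * (pi / t + c * pi * M) ^ card V)"
proof -
  have "(\<integral>\<^sup>+ f \<in> G. ennreal (g f) \<partial>lebC V)
      \<le> (\<integral>\<^sup>+ f. ennreal K * (\<Prod>y\<in>V. ennreal (disk_weight t c M (f y))) \<partial>lebC V)"
  proof (rule nn_integral_mono)
    fix f
    have "ennreal (K * (\<Prod>y\<in>V. disk_weight t c M (f y)))
        = ennreal K * (\<Prod>y\<in>V. ennreal (disk_weight t c M (f y)))"
      using c K by (simp add: ennreal_mult prod_ennreal prod_nonneg disk_weight_nonneg)
    moreover have "ennreal (g f) * indicator G f \<le> ennreal (K * (\<Prod>y\<in>V. disk_weight t c M (f y)))"
      using dom[of f] by (cases "f \<in> G") (simp_all add: ennreal_leI)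
    ultimately show "ennreal (g f) * indicator G f
        \<le> ennreal K * (\<Prod>y\<in>V. ennreal (disk_weight t c M (f y)))"
      by simp
  qed
  also have "\<dots> = ennreal K * (\<integral>\<^sup>+ f. (\<Prod>y\<in>V. ennreal (disk_weight t c M (f y))) \<partial>lebC V)"
    by (rule nn_integral_cmult) (simp add: lebC_def)
  also have "\<dots> = ennreal K * ennreal ((pi / t + c * pi * M) ^ card V)"
    using assms by (simp add: disk_weight_prod_integral)
  also have "\<dots> = ennreal (K * (pi / t + c * pi * M) ^ card V)"
    using t c M K by (simp add: ennreal_mult)
  finally show ?thesis .
qed

definition heavy :: "real \<Rightarrow> 'v set \<Rightarrow> ('v \<Rightarrow> complex) \<Rightarrow> 'v set" where
  "heavy T V f = {y\<in>V. T < (cmod (f y))\<^sup>2}"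

definition mass :: "'v set \<Rightarrow> ('v \<Rightarrow> complex) \<Rightarrow> real" where
  "mass A f = (\<Sum>y\<in>A. (cmod (f y))\<^sup>2)"

lemma mass_nonneg: "mass A f \<ge> 0"
  by (simp add: mass_def sum_nonneg)

lemma Sk2_eq_mass: "Sk 2 V f = mass V f"
  by (simp add: Sk_def mass_def)

lemma heavy_subset: "heavy T V f \<subseteq> V"
  by (auto simp: heavy_def)

lemma finite_heavy: "finite V \<Longrightarrow> finite (heavy T V f)"
  by (simp add: heavy_def)

lemma mass_heavy_light:
  assumes "finite V"
  shows "mass V f = mass (heavy T V f) f + mass (V - heavy T V f) f"
  unfolding mass_def using assms heavy_subset by (metis sum.subset_diff add.commute)

lemma sq_cmod_le_mass:
  assumes "finite A" "y \<in> A"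
  shows "(cmod (f y))\<^sup>2 \<le> mass A f"
  unfolding mass_def using assms by (intro member_le_sum) auto

text \<open>The fourth moment is controlled by the square of the heavy mass plus T times the light
  mass: each heavy term is at most |f_y|^2 times the heavy mass, each light one T |f_y|^2.\<close>

lemma Sk4_le_heavy_light:
  assumes V: "finite V"
  shows "Sk 4 V f \<le> (mass (heavy T V f) f)\<^sup>2 + T * mass (V - heavy T V f) f"
proof -
  define H where "H = heavy T V f"
  have fin: "finite H" "finite (V - H)" using V by (simp_all add: H_def finite_heavy)
  have fourth: "cmod (f y) ^ 4 = (cmod (f y))\<^sup>2 * (cmod (f y))\<^sup>2" for y
    by (simp add: power4_eq_xxxx power2_eq_square)
  have "(\<Sum>y\<in>H. cmod (f y) ^ 4) \<le> (\<Sum>y\<in>H. (cmod (f y))\<^sup>2 * mass H f)"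
    unfolding fourth using fin by (intro sum_mono mult_left_mono sq_cmod_le_mass) auto
  also have "\<dots> = (mass H f)\<^sup>2" by (simp add: mass_def sum_distrib_right[symmetric] power2_eq_square)
  finally have heavy_part: "(\<Sum>y\<in>H. cmod (f y) ^ 4) \<le> (mass H f)\<^sup>2" .
  have "(\<Sum>y\<in>V - H. cmod (f y) ^ 4) \<le> (\<Sum>y\<in>V - H. T * (cmod (f y))\<^sup>2)"
    unfolding fourth by (intro sum_mono mult_right_mono) (auto simp: H_def heavy_def)
  also have "\<dots> = T * mass (V - H) f" by (simp add: mass_def sum_distrib_left)
  finally have light_part: "(\<Sum>y\<in>V - H. cmod (f y) ^ 4) \<le> T * mass (V - H) f" .
  have "Sk 4 V f = (\<Sum>y\<in>H. cmod (f y) ^ 4) + (\<Sum>y\<in>V - H. cmod (f y) ^ 4)"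
    unfolding Sk_def using V heavy_subset by (metis H_def sum.subset_diff add.commute)
  with heavy_part light_part show ?thesis by (simp add: H_def)
qed

lemma card_heavy_le:
  assumes "finite V"
  shows "T * real (card (heavy T V f)) \<le> mass (heavy T V f) f"
proof -
  have "T * real (card (heavy T V f)) = (\<Sum>y\<in>heavy T V f. T)" by simp
  also have "\<dots> \<le> mass (heavy T V f) f"
    unfolding mass_def by (rule sum_mono) (simp add: heavy_def less_imp_le)
  finally show ?thesis .
qed

text \<open>Lower bound for the product weight: heavy coordinates (bounded by sqrt M) contribute at
  least c = exp(-la) each, light ones their Gaussian factor.\<close>

lemma disk_weight_prod_lower:
  fixes f :: "'v \<Rightarrow> complex"
  assumes V: "finite V" and t: "t \<ge> 0" and la: "la \<ge> 0"
    and bounded: "\<forall>y\<in>V. (cmod (f y))\<^sup>2 \<le> M"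
    and count: "real (card (heavy T V f)) \<le> k"
    and light: "mass (V - heavy T V f) f \<le> R"
  shows "exp (- la * k - t * R) \<le> (\<Prod>y\<in>V. disk_weight t (exp (-la)) M (f y))"
proof -
  define H where "H = heavy T V f"
  let ?w = "\<lambda>y. disk_weight t (exp (-la)) M (f y)"
  have fin: "finite H" "finite (V - H)" using V by (simp_all add: H_def finite_heavy)
  have "exp (- la * k) \<le> exp (- la * real (card H))"
    using count la by (simp add: H_def mult_left_mono)
  also have "\<dots> = (\<Prod>y\<in>H. exp (-la))"
    by (simp add: exp_of_nat_mult[symmetric] mult.commute)
  also have "\<dots> \<le> (\<Prod>y\<in>H. ?w y)"
  proof (rule prod_mono)
    fix y assume "y \<in> H"
    then have "(cmod (f y))\<^sup>2 \<le> M" using bounded by (auto simp: H_def heavy_def)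
    then have "f y \<in> cball 0 (sqrt M)" by (simp add: real_le_rsqrt)
    then show "0 \<le> exp (-la) \<and> exp (-la) \<le> ?w y" by (simp add: disk_weight_def)
  qed
  finally have heavy_part: "exp (- la * k) \<le> (\<Prod>y\<in>H. ?w y)" .
  have "exp (- t * R) \<le> exp (- t * mass (V - H) f)"
    using light t by (simp add: H_def mult_left_mono)
  also have "\<dots> = (\<Prod>y\<in>V - H. exp (- t * (cmod (f y))\<^sup>2))"
    using fin by (simp add: mass_def exp_sum[symmetric] sum_distrib_left)
  also have "\<dots> \<le> (\<Prod>y\<in>V - H. ?w y)"
    by (rule prod_mono) (simp add: disk_weight_def)
  finally have light_part: "exp (- t * R) \<le> (\<Prod>y\<in>V - H. ?w y)" .
  have "exp (- la * k - t * R) = exp (- la * k) * exp (- t * R)"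
    by (simp add: exp_diff exp_minus field_simps)
  also have "\<dots> \<le> (\<Prod>y\<in>H. ?w y) * (\<Prod>y\<in>V - H. ?w y)"
    by (rule mult_mono[OF heavy_part light_part]) (auto intro!: prod_nonneg disk_weight_nonneg)
  also have "\<dots> = (\<Prod>y\<in>V. ?w y)"
    using V heavy_subset by (metis H_def prod.subset_diff mult.commute)
  finally show ?thesis .
qed

lemma ge_of_square_ge:
  fixes s A u :: real
  assumes s: "s \<ge> 0" and u: "u \<ge> 0" and sq: "A\<^sup>2 - u * A \<le> s\<^sup>2"
  shows "A - u \<le> s"
proof (cases "A - u \<le> 0")
  case False
  then have "u * u \<le> A * u" using u by (intro mult_right_mono) auto
  then have "(A - u)\<^sup>2 \<le> A\<^sup>2 - u * A" by (simp add: power2_eq_square algebra_simps)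
  then show ?thesis using power2_le_imp_le[OF order_trans[OF _ sq] s] by blast
qed (use s in linarith)

lemma heavy_mass_lower:
  fixes s r A T S2 S4 :: real
  assumes s: "s \<ge> 0" and A: "A > 0" and T: "T \<ge> 0" and r: "0 \<le> r" "r \<le> S2"
    and S4_lower: "A\<^sup>2 \<le> S4" and S4_upper: "S4 \<le> s\<^sup>2 + T * r"
  shows "A - T * S2 / A \<le> s"
proof (rule ge_of_square_ge[OF s])
  show "0 \<le> T * S2 / A" using T r A by simp
  have "T * r \<le> T * S2" using T r by (intro mult_left_mono) auto
  then show "A\<^sup>2 - T * S2 / A * A \<le> s\<^sup>2" using A S4_lower S4_upper by simp
qed

text \<open>The light mass on the shell.  With P = n delta and T e2 <= P, a e2 >= 1 (the hypothesis
  a > n^(-2 eps/5)), the light mass exceeds the "free" amount (b - a) n only by O(P).\<close>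

lemma light_mass_bound:
  fixes n \<delta> T P e2 a b B S2 S4 s r :: real
  assumes \<delta>: "0 \<le> \<delta>" "\<delta> \<le> 1/2" and n: "n > 0" and T: "T > 0"
    and P: "n * \<delta> = P" and Te2: "T * e2 \<le> P" and ae2: "1 \<le> a * e2"
    and ab: "0 < a" "a < b" "b \<le> B"
    and S2: "S2 = s + r" and S4: "S4 \<le> s\<^sup>2 + T * r" and sr: "s \<ge> 0" "r \<ge> 0"
    and S4_lower: "a\<^sup>2 * n\<^sup>2 * (1 - \<delta>) \<le> S4" and S2_upper: "S2 \<le> b * n * (1 + \<delta>)"
  shows "r \<le> (b - a) * n + 5 * B * P"
proof -
  define A where "A = a * n * (1 - \<delta>)"
  have A: "A > 0" using ab n \<delta> by (simp add: A_def)
  have "A\<^sup>2 = a\<^sup>2 * n\<^sup>2 * ((1 - \<delta>) * (1 - \<delta>))" by (simp add: A_def power2_eq_square)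
  also have "\<dots> \<le> a\<^sup>2 * n\<^sup>2 * (1 - \<delta>)"
    using \<delta> mult_right_mono[of "1 - \<delta>" 1 "1 - \<delta>"] by (intro mult_left_mono) auto
  finally have "A\<^sup>2 \<le> S4" using S4_lower by linarith
  then have s_lower: "A - T * S2 / A \<le> s"
    using heavy_mass_lower[OF sr(1) A _ sr(2) _ _ S4] T S2 sr by simp
  have "T * S2 \<le> T * n * (b * (1 + \<delta>))"
    using mult_left_mono[OF S2_upper, of T] T by (simp add: algebra_simps)
  also have "\<dots> \<le> T * n * (B * (3/2))"
    using ab \<delta> T n by (intro mult_left_mono mult_mono) auto
  also have "\<dots> \<le> 3 * (T * n * B) * ((a * e2) * (1 - \<delta>))"
  proof -
    have "1/2 \<le> (a * e2) * (1 - \<delta>)" using ae2 \<delta> mult_mono[OF ae2, of "1/2" "1 - \<delta>"] by simp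
    then show ?thesis using T n ab by (simp add: mult_left_mono)
  qed
  also have "\<dots> = 3 * B * (T * e2) * A" by (simp add: A_def algebra_simps)
  also have "\<dots> \<le> 3 * B * P * A" using Te2 A ab by (intro mult_right_mono mult_left_mono) auto
  finally have "T * S2 / A \<le> 3 * B * P" using A by (simp add: pos_divide_le_eq)
  moreover have "(a + b) * P \<le> 2 * B * P"
    using ab P n \<delta> by (intro mult_right_mono) auto
  moreover have "b * n * (1 + \<delta>) - A = (b - a) * n + (a + b) * P"
    unfolding P[symmetric] by (simp add: A_def algebra_simps)
  ultimately show ?thesis using s_lower S2 S2_upper by linarith
qed

lemma Gamma_bounds:
  assumes "f \<in> Gamma V a b"
  defines "n \<equiv> real (card V)"
  defines "\<delta> \<equiv> n powr (-1/5)"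
  shows "a\<^sup>2 * n\<^sup>2 * (1 - \<delta>) \<le> Sk 4 V f" "Sk 4 V f \<le> a\<^sup>2 * n\<^sup>2 * (1 + \<delta>)"
    "Sk 2 V f \<le> b * n * (1 + \<delta>)"
  using assms unfolding Gamma_def Let_def by auto

lemma Gamma_disk_weight_lower:
  fixes V :: "'v set"
  assumes f: "f \<in> Gamma V a b" and V: "finite V"
    and n: "n = real (card V)" and n0: "n > 0" and \<delta>: "\<delta> = n powr (-1/5)" and \<delta>_half: "\<delta> \<le> 1/2"
    and T: "T > 0" and P: "n * \<delta> = P" "T * P = n" and Te2: "T * e2 \<le> P" and ae2: "1 \<le> a * e2"
    and ab: "0 < a" "a < b" "b \<le> B" and t: "t \<ge> 0" and la: "la \<ge> 0"
  shows "exp (- la * (2 * B * P) - t * ((b - a) * n + 5 * B * P))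
    \<le> (\<Prod>y\<in>V. disk_weight t (exp (-la)) (2 * B * n) (f y))"
proof (rule disk_weight_prod_lower[OF V t la])
  define s where "s = mass (heavy T V f) f"
  note G = Gamma_bounds[OF f, folded n, folded \<delta>]
  have \<delta>0: "0 \<le> \<delta>" by (simp add: \<delta>)
  have S2: "Sk 2 V f = s + mass (V - heavy T V f) f"
    by (simp add: Sk2_eq_mass s_def mass_heavy_light[OF V])
  show "mass (V - heavy T V f) f \<le> (b - a) * n + 5 * B * P"
    by (rule light_mass_bound[OF \<delta>0 \<delta>_half n0 T P(1) Te2 ae2 ab S2 _ _ _ G(1) G(3)])
      (use Sk4_le_heavy_light[OF V, of f T] in \<open>simp_all add: s_def mass_nonneg\<close>)
  have "b * (1 + \<delta>) \<le> B * 2" using ab \<delta>_half \<delta>0 by (intro mult_mono) auto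
  then have "n * (b * (1 + \<delta>)) \<le> n * (B * 2)" using n0 by (intro mult_left_mono) auto
  then have S2_le: "Sk 2 V f \<le> 2 * B * n" using G(3) by (simp add: algebra_simps)
  then show "\<forall>y\<in>V. (cmod (f y))\<^sup>2 \<le> 2 * B * n"
    using V sq_cmod_le_mass[of V _ f] by (force simp: Sk2_eq_mass)
  have "T * (2 * B * P) = 2 * B * n" using P(2) by (simp add: algebra_simps)
  then have "T * real (card (heavy T V f)) \<le> T * (2 * B * P)"
    using card_heavy_le[OF V, of T f] mass_nonneg[of "V - heavy T V f" f] S2 S2_le
    unfolding s_def by linarith
  then show "real (card (heavy T V f)) \<le> 2 * B * P" using T by simp
qed

lemma scale_powers:
  fixes n \<epsilon> :: real
  assumes n32: "n \<ge> 32" and \<epsilon>: "0 < \<epsilon>" "\<epsilon> < 1/5"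
  shows "n powr (-1/5) \<le> 1/2" "n * n powr (-1/5) = n powr (4/5)"
    "n powr (1/5) * n powr (4/5) = n" "n powr (1/5) * n powr (2 * \<epsilon> / 5) \<le> n powr (4/5)"
    "1 \<le> n powr (4/5)" "n powr (4/5) \<le> n" "\<epsilon> * ln n \<le> n powr \<epsilon>" "1 \<le> n powr \<epsilon>"
    "n powr (4/5 + \<epsilon>) = n powr (4/5) * n powr \<epsilon>"
    "n powr (-2 * \<epsilon> / 5) = 1 / n powr (2 * \<epsilon> / 5)" "0 < n powr (1/5)"
proof -
  have n0: "n > 0" and n1: "n \<ge> 1" using n32 by simp_all
  have "(2::real) = 32 powr (1/5)"
    using powr_powr[of 2 5 "1/5"] by simp
  also have "\<dots> \<le> n powr (1/5)" using n32 by (intro powr_mono2) auto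
  finally have "2 \<le> n powr (1/5)" .
  then show "n powr (-1/5) \<le> 1/2" using n0 by (simp add: powr_minus_divide divide_le_eq)
  show "n * n powr (-1/5) = n powr (4/5)"
    using powr_add[of n 1 "-1/5"] n0 by simp
  show "n powr (1/5) * n powr (4/5) = n"
    using powr_add[of n "1/5" "4/5"] n0 by simp
  show "n powr (1/5) * n powr (2 * \<epsilon> / 5) \<le> n powr (4/5)"
    using n1 \<epsilon> by (simp add: powr_add[symmetric] powr_mono)
  show "1 \<le> n powr (4/5)" "1 \<le> n powr \<epsilon>" using n1 \<epsilon> by (auto intro: ge_one_powr_ge_zero)
  show "n powr (4/5) \<le> n" using n1 powr_mono[of "4/5" 1 n] by simp
  show "\<epsilon> * ln n \<le> n powr \<epsilon>"
    using ln_le_minus_one[of "n powr \<epsilon>"] n0 by (simp add: ln_powr)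
  show "n powr (4/5 + \<epsilon>) = n powr (4/5) * n powr \<epsilon>" by (rule powr_add)
  show "n powr (-2 * \<epsilon> / 5) = 1 / n powr (2 * \<epsilon> / 5)"
    using powr_minus_divide[of n "2 * \<epsilon> / 5"] by simp
  show "0 < n powr (1/5)" using n0 by simp
qed

lemma mult_ln_add_le:
  fixes n d u :: real
  assumes n: "n > 0" and d: "d > 0" and u: "u \<ge> 0"
  shows "n * ln (d + u / n) \<le> n * ln d + u / d"
proof -
  have pos: "1 + u / (n * d) > 0" using n d u by (simp add: add_pos_nonneg)
  have "d + u / n = d * (1 + u / (n * d))" using n d by (simp add: field_simps)
  then have "ln (d + u / n) = ln d + ln (1 + u / (n * d))"
    using ln_mult_pos[OF d pos] by simp
  also have "ln (1 + u / (n * d)) \<le> u / (n * d)"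
    using n d u by (intro ln_add_one_self_le_self) simp
  finally have "n * ln (d + u / n) \<le> n * (ln d + u / (n * d))"
    using n by (intro mult_left_mono) auto
  then show ?thesis using n by (simp add: distrib_left)
qed

lemma power_one_plus_inverse_le:
  fixes x :: real
  assumes x: "x > 0" and N: "N > 0"
  shows "(x * (1 + 1 / real N)) ^ N \<le> exp (real N * ln x + 1)"
proof -
  have "(1 + 1 / real N) ^ N \<le> exp (1 / real N) ^ N"
    by (intro power_mono) (auto simp: add.commute exp_ge_add_one_self_aux)
  also have "\<dots> = exp 1" using N by (simp add: exp_of_nat_mult[symmetric])
  finally have e: "(1 + 1 / real N) ^ N \<le> exp 1" .
  have "(x * (1 + 1 / real N)) ^ N = exp (real N * ln x) * (1 + 1 / real N) ^ N"
    using x by (simp add: power_mult_distrib exp_of_nat_mult)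
  also have "\<dots> \<le> exp (real N * ln x) * exp 1" using e by (intro mult_left_mono) auto
  finally show ?thesis by (simp add: exp_add)
qed

text \<open>With t = n/R and M = 2 B n, the quantity n t M = 2 B n^3 / R lies between 1 and n^3, so its
  logarithm la (the cost per heavy coordinate) is nonnegative and O(log n).\<close>

lemma tilt_ratio_bounds:
  fixes n P B R d :: real
  assumes n32: "n \<ge> 32" and P: "1 \<le> P" "P \<le> n" and B: "B > 0" and d: "0 < d" "d \<le> B"
    and R: "R = d * n + 5 * B * P"
  shows "1 \<le> 2 * B * n ^ 3 / R" "2 * B * n ^ 3 / R \<le> n ^ 3"
proof -
  have "d * n \<le> B * n" "5 * B * P \<le> 5 * B * n"
    using d P B n32 by (simp_all add: mult_right_mono)
  then have R_upper: "R \<le> 6 * B * n" using R by linarith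
  have R_lower: "5 * B \<le> R"
    using R mult_left_mono[OF P(1), of "5 * B"] d n32 B by (simp add: add_increasing)
  have "1 \<le> n\<^sup>2 / 3" using mult_mono[OF n32 n32] n32 by (simp add: power2_eq_square)
  also have "n\<^sup>2 / 3 = 2 * B * n ^ 3 / (6 * B * n)"
    using B n32 by (simp add: power2_eq_square power3_eq_cube field_simps)
  also have "\<dots> \<le> 2 * B * n ^ 3 / R"
    using R_upper R_lower B n32 by (intro divide_left_mono) auto
  finally show "1 \<le> 2 * B * n ^ 3 / R" .
  have "2 * B * n ^ 3 \<le> n ^ 3 * R" using R_lower B n32 mult_left_mono[of "2 * B" R "n ^ 3"] by simp
  then show "2 * B * n ^ 3 / R \<le> n ^ 3" using R_lower B by (simp add: divide_le_eq)
qed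

text \<open>The constant of the theorem: the first three summands absorb the error terms of the
  optimisation, the summand 32 makes n >= C imply n >= 32 (so that delta <= 1/2).\<close>

definition shell_const :: "real \<Rightarrow> real \<Rightarrow> real \<Rightarrow> real" where
  "shell_const \<beta> B \<epsilon> = \<beta> * B ^ 3 + 6 * B + 6 * B\<^sup>2 / \<epsilon> + 32"

text \<open>All error terms (tilt on the delta-window, heavy cost la k, the factor e from (1 + 1/n)^n,
  and the light-mass surplus 5 B P) are O(n^(4/5+eps)/(b - a)).\<close>

lemma error_terms_le:
  fixes n P Q ne a b B \<beta> \<epsilon> la :: real
  assumes n32: "n \<ge> 32" and P: "1 \<le> P" and \<epsilon>: "\<epsilon> > 0" and lnn: "\<epsilon> * ln n \<le> ne"
    and ne: "1 \<le> ne" and Q: "Q = P * ne" and ab: "0 < a" "a < b" "b \<le> B" and \<beta>: "\<beta> \<ge> 0"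
    and la: "la \<le> 3 * ln n"
  shows "\<beta> * a\<^sup>2 * P + la * (2 * B * P) + 1 + 5 * B * P / (b - a) \<le> shell_const \<beta> B \<epsilon> * (Q / (b - a))"
proof -
  define X where "X = Q / (b - a)"
  have B: "B > 0" and d: "0 < b - a" "b - a \<le> B" using ab by auto
  have QP: "P \<le> Q" using Q mult_left_mono[OF ne, of P] P by simp
  have QX: "Q \<le> B * X"
    using mult_left_mono[of 1 "B / (b - a)" Q] QP P d by (simp add: X_def field_simps)
  have X0: "X \<ge> 0" using d QP P by (simp add: X_def)
  have tilt: "\<beta> * a\<^sup>2 * P \<le> \<beta> * B ^ 3 * X"
  proof -
    have "a\<^sup>2 * P \<le> B\<^sup>2 * (B * X)"
      using ab QP QX P mult_mono[of "a\<^sup>2" "B\<^sup>2" P "B * X"] power_mono[of a B 2] by simp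
    then show ?thesis using \<beta> mult_left_mono by (simp add: power3_eq_cube power2_eq_square mult.assoc)
  qed
  have "ln n \<le> ne / \<epsilon>" using lnn \<epsilon> by (simp add: field_simps mult.commute)
  then have "la * (2 * B * P) \<le> 3 * (ne / \<epsilon>) * (2 * B * P)"
    using la B P by (intro mult_right_mono) auto
  also have "\<dots> = 6 * B / \<epsilon> * Q" by (simp add: Q)
  also have "\<dots> \<le> 6 * B / \<epsilon> * (B * X)" using QX B \<epsilon> by (intro mult_left_mono) auto
  finally have heavy_cost: "la * (2 * B * P) \<le> 6 * B\<^sup>2 / \<epsilon> * X" by (simp add: power2_eq_square)
  have surplus: "5 * B * P / (b - a) \<le> 5 * B * X"
    unfolding X_def using QP d B by (simp add: divide_right_mono)
  have "1 \<le> B * X" using QX QP P by linarith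
  with tilt heavy_cost surplus X0 show ?thesis
    unfolding X_def[symmetric] shell_const_def by (simp add: ring_distribs)
qed

lemma optimised_weight_bound:
  fixes n P Q ne a b B \<beta> \<epsilon> \<delta> :: real and N :: nat
  assumes n: "n = real N" "n \<ge> 32" and P: "1 \<le> P" "P \<le> n" "n * \<delta> = P"
    and \<epsilon>: "\<epsilon> > 0" and lnn: "\<epsilon> * ln n \<le> ne" and ne: "1 \<le> ne" and Q: "Q = P * ne"
    and ab: "0 < a" "a < b" "b \<le> B" and \<beta>: "\<beta> \<ge> 0"
  defines "R \<equiv> (b - a) * n + 5 * B * P"
  defines "t \<equiv> n / R"
  defines "la \<equiv> ln (2 * B * n ^ 3 / R)"
  shows "la \<ge> 0" "t > 0"
    "exp (\<beta> * a\<^sup>2 * n * (1 + \<delta>) + la * (2 * B * P) + t * R)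
       * (pi / t + exp (- la) * pi * (2 * B * n)) ^ N
     \<le> exp (n * L \<beta> a b + shell_const \<beta> B \<epsilon> * Q / (b - a))"
proof -
  have B: "B > 0" and d: "0 < b - a" "b - a \<le> B" using ab by auto
  note ratio = tilt_ratio_bounds[OF n(2) P(1,2) B d R_def[THEN meta_eq_to_obj_eq]]
  have R: "R > 0" using d n(2) B P(1) by (simp add: R_def add_pos_pos)
  show la0: "la \<ge> 0" using ratio(1) by (simp add: la_def)
  have "la \<le> ln (n ^ 3)" using ratio n(2) by (simp add: la_def)
  then have la3: "la \<le> 3 * ln n" using n(2) by (simp add: ln_realpow)
  show t: "t > 0" using R n(2) by (simp add: t_def)
  have tR: "t * R = n" using R by (simp add: t_def)
  have base: "pi / t + exp (- la) * pi * (2 * B * n) = (pi / t) * (1 + 1 / real N)"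
    using ratio(1) R B n by (simp add: la_def t_def exp_minus field_simps power3_eq_cube)
  have pi_t: "pi / t = pi * ((b - a) + 5 * B * P / n)" using n(2) by (simp add: t_def R_def field_simps)
  have "(b - a) + 5 * B * P / n > 0" using d B P(1) n(2) by (simp add: add_pos_nonneg)
  then have "ln (pi / t) = ln pi + ln ((b - a) + 5 * B * P / n)"
    unfolding pi_t by (rule ln_mult_pos[OF pi_gt_zero])
  then have "n * ln (pi / t) = n * ln pi + n * ln ((b - a) + 5 * B * P / n)"
    by (simp add: distrib_left)
  also have "\<dots> \<le> n * ln pi + n * ln (b - a) + 5 * B * P / (b - a)"
    using mult_ln_add_le[of n "b - a" "5 * B * P"] n(2) d B P(1) by simp
  finally have ln_base: "n * ln (pi / t) \<le> n * ln pi + n * ln (b - a) + 5 * B * P / (b - a)" .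
  have "(pi / t + exp (- la) * pi * (2 * B * n)) ^ N \<le> exp (n * ln (pi / t) + 1)"
    unfolding base unfolding n(1) using t n by (intro power_one_plus_inverse_le) auto
  then have "exp (\<beta> * a\<^sup>2 * n * (1 + \<delta>) + la * (2 * B * P) + t * R)
       * (pi / t + exp (- la) * pi * (2 * B * n)) ^ N
     \<le> exp (\<beta> * a\<^sup>2 * n * (1 + \<delta>) + la * (2 * B * P) + t * R + (n * ln (pi / t) + 1))"
    by (simp add: exp_add mult_left_mono)
  also have "\<dots> \<le> exp (n * L \<beta> a b + shell_const \<beta> B \<epsilon> * Q / (b - a))"
  proof -
    have "\<beta> * a\<^sup>2 * n * (1 + \<delta>) = \<beta> * a\<^sup>2 * n + \<beta> * a\<^sup>2 * P" using P(3) by (simp add: algebra_simps)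
    moreover have "n * L \<beta> a b = \<beta> * a\<^sup>2 * n + n * ln (b - a) + n * ln pi + n"
      by (simp add: L_def algebra_simps)
    ultimately show ?thesis
      using error_terms_le[OF n(2) P(1) \<epsilon> lnn ne Q ab \<beta> la3] tR ln_base by simp
  qed
  finally show "exp (\<beta> * a\<^sup>2 * n * (1 + \<delta>) + la * (2 * B * P) + t * R)
       * (pi / t + exp (- la) * pi * (2 * B * n)) ^ N
     \<le> exp (n * L \<beta> a b + shell_const \<beta> B \<epsilon> * Q / (b - a))" .
qed

lemma shell_integral_bound:
  fixes V :: "'v set" and \<beta> B \<epsilon> a b :: real
  assumes V: "finite V" and n32: "real (card V) \<ge> 32" and \<beta>: "\<beta> \<ge> 0" and \<epsilon>: "0 < \<epsilon>" "\<epsilon> < 1/5"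
    and a: "real (card V) powr (-2 * \<epsilon> / 5) < a" and ab: "a < b" "b \<le> B"
  shows "(\<integral>\<^sup>+ f \<in> Gamma V a b. ennreal (exp (\<beta> / real (card V) * Sk 4 V f)) \<partial>lebC V)
    \<le> ennreal (exp (real (card V) * L \<beta> a b
         + shell_const \<beta> B \<epsilon> * real (card V) powr (4/5 + \<epsilon>) / (b - a)))"
proof -
  define n where "n = real (card V)"
  define \<delta> T P e2 ne where "\<delta> = n powr (-1/5)" and "T = n powr (1/5)" and "P = n powr (4/5)"
    and "e2 = n powr (2 * \<epsilon> / 5)" and "ne = n powr \<epsilon>"
  note scale = scale_powers[OF n32[folded n_def] \<epsilon>, folded \<delta>_def T_def P_def e2_def ne_def]
  have n0: "n > 0" using n32 by (simp add: n_def)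
  have a0: "a > 0" using le_less_trans[OF powr_ge_zero a] .
  have ae2: "1 \<le> a * e2" using a scale(10) n0 by (simp add: n_def e2_def divide_less_eq less_imp_le)
  define R where "R = (b - a) * n + 5 * B * P"
  define t where "t = n / R"
  define la where "la = ln (2 * B * n ^ 3 / R)"
  note opt = optimised_weight_bound[OF n_def n32[folded n_def] scale(5,6,2) \<epsilon>(1) scale(7,8,9) a0 ab \<beta>,
      folded R_def, folded t_def la_def]
  define K where "K = exp (\<beta> * a\<^sup>2 * n * (1 + \<delta>) + la * (2 * B * P) + t * R)"
  have "exp (\<beta> / n * Sk 4 V f) \<le> K * (\<Prod>y\<in>V. disk_weight t (exp (- la)) (2 * B * n) (f y))"
    if f: "f \<in> Gamma V a b" for f
  proof -
    have "\<beta> / n * Sk 4 V f \<le> \<beta> / n * (a\<^sup>2 * n\<^sup>2 * (1 + \<delta>))"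
      using Gamma_bounds(2)[OF f] \<beta> n0 by (intro mult_left_mono) (auto simp: n_def \<delta>_def)
    then have "exp (\<beta> / n * Sk 4 V f) \<le> K * exp (- la * (2 * B * P) - t * R)"
      using n0 by (simp add: K_def exp_add[symmetric] power2_eq_square)
    also have "\<dots> \<le> K * (\<Prod>y\<in>V. disk_weight t (exp (- la)) (2 * B * n) (f y))"
      using Gamma_disk_weight_lower[OF f V n_def n0 \<delta>_def scale(1) scale(11) scale(2,3,4) ae2 a0 ab
          less_imp_le[OF opt(2)] opt(1)]
      by (simp add: K_def R_def)
    finally show ?thesis .
  qed
  then have "(\<integral>\<^sup>+ f \<in> Gamma V a b. ennreal (exp (\<beta> / n * Sk 4 V f)) \<partial>lebC V)
    \<le> ennreal (K * (pi / t + exp (- la) * pi * (2 * B * n)) ^ card V)"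
    using opt(1,2) a0 ab n0 by (intro nn_integral_le_disk_weight_prod[OF V]) (auto simp: K_def)
  also have "\<dots> \<le> ennreal (exp (n * L \<beta> a b + shell_const \<beta> B \<epsilon> * n powr (4/5 + \<epsilon>) / (b - a)))"
    using opt(3) by (intro ennreal_leI) (simp add: K_def mult.assoc)
  finally show ?thesis by (simp add: n_def)
qed

theorem lemma3p2:
  fixes \<beta> B \<epsilon> :: real
  assumes "\<beta> \<ge> 0" and "B > 0" and "0 < \<epsilon>" and "\<epsilon> < 1/5"
  shows "\<exists>C>0. \<forall>V :: nat set. \<forall>a b :: real.
           finite V \<and> real (card V) \<ge> C \<and>
           real (card V) powr (-2 * \<epsilon> / 5) < a \<and> a < b \<and> b \<le> B \<longrightarrow>
           (\<integral>\<^sup>+ f \<in> Gamma V a b. ennreal (exp (\<beta> / real (card V) * Sk 4 V f)) \<partial>lebC V)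
             \<le> ennreal (exp (real (card V) * L \<beta> a b
                  + C * real (card V) powr (4/5 + \<epsilon>) / (b - a)))"
proof (intro exI[of _ "shell_const \<beta> B \<epsilon>"] conjI allI impI)
  have C32: "shell_const \<beta> B \<epsilon> \<ge> 32" using assms by (simp add: shell_const_def)
  then show "shell_const \<beta> B \<epsilon> > 0" by linarith
  fix V :: "nat set" and a b :: real
  assume "finite V \<and> real (card V) \<ge> shell_const \<beta> B \<epsilon> \<and>
    real (card V) powr (-2 * \<epsilon> / 5) < a \<and> a < b \<and> b \<le> B"
  with C32 assms show "(\<integral>\<^sup>+ f \<in> Gamma V a b. ennreal (exp (\<beta> / real (card V) * Sk 4 V f)) \<partial>lebC V)
      \<le> ennreal (exp (real (card V) * L \<beta> a b
           + shell_const \<beta> B \<epsilon> * real (card V) powr (4/5 + \<epsilon>) / (b - a)))"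
    by (intro shell_integral_bound) auto
qed

end
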